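(* Let $n,d,c,\sigma\ge1$ be integers, $p$ a prime, and $x,y\in\{0,\ldots,c\}^n$ each having at most $\sigma$ nonzero coordinates. Let $\rho:\{1,\ldots,n\}\to\{1,\ldots,d\}$ be a uniformly random mapping and $r_1,\ldots,r_n$ independent uniform elements of $\{0,\ldots,p-1\}$, define $\phi_j(z)=\big(\sum_{i:\rho(i)=j}z_ir_i\big)\bmod p$, let $f=|\{j:\phi_j(x)\neq\phi_j(y)\}|$ and $f^*=\mathbb{E}[f]$. Then for every $\alpha>0$, $$\Pr\big[|f-f^*|\ge\alpha\big]\le 2\exp\Big(-\frac{\alpha^2}{4\sigma}\Big).$$
   Context: FSketch construction as described in the claim; the sketches of $x$ and $y$ use the same $\rho$ and $r_1,\ldots,r_n$. *)

theory Defs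
  imports "HOL-Probability.Probability"
begin

definition fsketch_space :: "nat \<Rightarrow> nat \<Rightarrow> nat \<Rightarrow> ((nat \<Rightarrow> nat) \<times> (nat \<Rightarrow> nat)) set" where
  "fsketch_space n d p = ({1..n} \<rightarrow>\<^sub>E {1..d}) \<times> ({1..n} \<rightarrow>\<^sub>E {0..<p})"

text \<open>Uniform random rho and independent uniform r_1..r_n (product of uniforms = uniform on product).\<close>
definition fsketch_pmf :: "nat \<Rightarrow> nat \<Rightarrow> nat \<Rightarrow> ((nat \<Rightarrow> nat) \<times> (nat \<Rightarrow> nat)) pmf" where
  "fsketch_pmf n d p = pmf_of_set (fsketch_space n d p)"

definition fsketch_phi :: "nat \<Rightarrow> nat \<Rightarrow> (nat \<Rightarrow> nat) \<Rightarrow> (nat \<Rightarrow> nat) \<Rightarrow> nat \<Rightarrow> (nat \<Rightarrow> nat) \<Rightarrow> nat" where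
  "fsketch_phi n p rho r j z = (\<Sum>i\<in>{i\<in>{1..n}. rho i = j}. z i * r i) mod p"

definition fsketch_f :: "nat \<Rightarrow> nat \<Rightarrow> nat \<Rightarrow> (nat \<Rightarrow> nat) \<Rightarrow> (nat \<Rightarrow> nat) \<Rightarrow> (nat \<Rightarrow> nat) \<times> (nat \<Rightarrow> nat) \<Rightarrow> nat" where
  "fsketch_f n d p x y \<omega> =
     card {j\<in>{1..d}. fsketch_phi n p (fst \<omega>) (snd \<omega>) j x \<noteq> fsketch_phi n p (fst \<omega>) (snd \<omega>) j y}"

end

(*
  The sample (\<rho>, r) is a product of n independent coordinates (\<rho> i, r i). Re-sampling one
  coordinate i only moves the summand x i * r i between the old bucket \<rho> i and the new one, so
  f changes by at most 2; it does not change at all when x i = y i, since coordinate i then adds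
  the same summand to \<phi>_j(x) and \<phi>_j(y), which cancels modulo p. As x and y differ in at most
  2\<sigma> coordinates, the squared difference bounds sum to at most 8\<sigma>, and McDiarmid's inequality
  gives 2 exp(-2\<alpha>^2 / 8\<sigma>). McDiarmid's inequality itself follows by exposing the coordinates one
  at a time and bounding each conditional moment generating function with Hoeffding's lemma.
  Neither the primality of p nor the bound c on the entries is needed.
*)
theory Submission
  imports Defs
begin

lemma expectation_Pi_pmf_insert:
  fixes F :: "('i \<Rightarrow> 'a) \<Rightarrow> real"
  assumes "finite A" "i \<notin> A" "\<And>j. j \<in> insert i A \<Longrightarrow> finite (set_pmf (q j))"
  shows "measure_pmf.expectation (Pi_pmf (insert i A) dflt q) F =
         measure_pmf.expectation (q i)
           (\<lambda>y. measure_pmf.expectation (Pi_pmf A dflt q) (\<lambda>f. F (f(i := y))))"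
proof -
  have fin: "finite (set_pmf (Pi_pmf A dflt q))"
    using assms by (auto simp: set_Pi_pmf)
  have "Pi_pmf (insert i A) dflt q = q i \<bind> (\<lambda>y. map_pmf (\<lambda>f. f(i := y)) (Pi_pmf A dflt q))"
    using assms by (simp add: Pi_pmf_insert' map_pmf_def)
  then have "measure_pmf.expectation (Pi_pmf (insert i A) dflt q) F =
      (\<Sum>y\<in>set_pmf (q i). pmf (q i) y *\<^sub>R
         measure_pmf.expectation (map_pmf (\<lambda>f. f(i := y)) (Pi_pmf A dflt q)) F)"
    using assms fin by (simp add: pmf_expectation_bind[where A = "set_pmf (q i)"])
  also have "\<dots> = measure_pmf.expectation (q i)
                    (\<lambda>y. measure_pmf.expectation (Pi_pmf A dflt q) (\<lambda>f. F (f(i := y))))"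
    using assms by (subst integral_measure_pmf[where A = "set_pmf (q i)"]) auto
  finally show ?thesis .
qed

lemma fun_upd_in_set_Pi_pmf:
  assumes "finite A" "f \<in> set_pmf (Pi_pmf A dflt q)" "y \<in> set_pmf (q i)"
  shows "f(i := y) \<in> set_pmf (Pi_pmf (insert i A) dflt q)"
  using assms by (auto simp: set_Pi_pmf PiE_dflt_def)

lemma pmf_expectation_le_add_const:
  fixes u v :: "'a \<Rightarrow> real"
  assumes "finite (set_pmf M)" "\<And>x. x \<in> set_pmf M \<Longrightarrow> u x \<le> v x + C"
  shows "measure_pmf.expectation M u \<le> measure_pmf.expectation M v + C"
proof -
  have "measure_pmf.expectation M u \<le> measure_pmf.expectation M (\<lambda>x. v x + C)"
    using assms by (intro integral_mono_AE integrable_measure_pmf_finite AE_pmfI)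
  also have "\<dots> = measure_pmf.expectation M v + C"
    using assms(1) by (simp add: integrable_measure_pmf_finite)
  finally show ?thesis .
qed

lemma Hoeffdings_lemma_pmf:
  fixes M :: "'a pmf" and h :: "'a \<Rightarrow> real"
  assumes "finite (set_pmf M)" "l > 0"
    and "\<And>y y'. y \<in> set_pmf M \<Longrightarrow> y' \<in> set_pmf M \<Longrightarrow> h y \<le> h y' + c"
  shows "measure_pmf.expectation M (\<lambda>y. exp (l * (h y - measure_pmf.expectation M h)))
           \<le> exp (l^2 * c^2 / 8)"
proof -
  define a where "a = Min (h ` set_pmf M)"
  have "a \<in> h ` set_pmf M"
    unfolding a_def using assms(1) set_pmf_not_empty by (intro Min_in) auto
  then obtain y0 where y0: "y0 \<in> set_pmf M" "h y0 = a" by blast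
  interpret h: interval_bounded_random_variable M h a "a + c"
  proof
    show "AE y in measure_pmf M. h y \<in> {a..a + c}"
      using assms(1) assms(3)[OF _ y0(1)] y0(2) by (intro AE_pmfI) (auto simp: a_def)
  qed simp
  have "ennreal (measure_pmf.expectation M (\<lambda>y. exp (l * (h y - measure_pmf.expectation M h))))
        = nn_integral M (\<lambda>y. exp (l * (h y - measure_pmf.expectation M h)))"
    using assms(1) by (intro nn_integral_eq_integral[symmetric] integrable_measure_pmf_finite) auto
  also have "\<dots> \<le> ennreal (exp (l^2 * (a + c - a)^2 / 8))"
    by (rule h.Hoeffdings_lemma_nn_integral) (rule assms(2))
  finally show ?thesis by simp
qed

lemma bounded_differences_fun_upd:
  assumes "finite A" "i \<notin> A" "y \<in> set_pmf (q i)"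
    and "\<And>w j z. w \<in> set_pmf (Pi_pmf (insert i A) dflt q) \<Longrightarrow> j \<in> insert i A \<Longrightarrow>
           z \<in> set_pmf (q j) \<Longrightarrow> \<bar>g w - g (w(j := z))\<bar> \<le> c j"
    and "w \<in> set_pmf (Pi_pmf A dflt q)" "j \<in> A" "z \<in> set_pmf (q j)"
  shows "\<bar>g (w(i := y)) - g (w(j := z, i := y))\<bar> \<le> c j"
proof -
  have "w(j := z, i := y) = w(i := y, j := z)"
    using assms(2,6) by (auto simp: fun_upd_twist)
  with assms(4)[OF fun_upd_in_set_Pi_pmf[OF assms(1,5,3)] _ assms(7)] assms(6) show ?thesis
    by (simp del: fun_upd_apply)
qed

lemma McDiarmid_exp_moment:
  fixes I :: "'i set" and q :: "'i \<Rightarrow> 'a pmf" and c :: "'i \<Rightarrow> real"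
    and g :: "('i \<Rightarrow> 'a) \<Rightarrow> real" and l :: real
  assumes "finite I" "\<And>j. j \<in> I \<Longrightarrow> finite (set_pmf (q j))" "l > 0"
    and "\<And>w j y. w \<in> set_pmf (Pi_pmf I dflt q) \<Longrightarrow> j \<in> I \<Longrightarrow> y \<in> set_pmf (q j) \<Longrightarrow>
           \<bar>g w - g (w(j := y))\<bar> \<le> c j"
  shows "measure_pmf.expectation (Pi_pmf I dflt q)
           (\<lambda>w. exp (l * (g w - measure_pmf.expectation (Pi_pmf I dflt q) g)))
         \<le> exp (l^2 * (\<Sum>j\<in>I. (c j)^2) / 8)"
  using assms(1,2,4)
proof (induction I arbitrary: g rule: finite_induct)
  case empty
  then show ?case by simp
next
  case (insert i A)
  define P where "P = Pi_pmf A dflt q"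
  define h where "h = (\<lambda>y. measure_pmf.expectation P (\<lambda>f. g (f(i := y))))"
  define \<mu> where "\<mu> = measure_pmf.expectation (Pi_pmf (insert i A) dflt q) g"
  have fin_P: "finite (set_pmf P)"
    using insert by (auto simp: P_def set_Pi_pmf)
  have fin_qi: "finite (set_pmf (q i))"
    using insert by simp
  have upd_in_set: "f(i := y) \<in> set_pmf (Pi_pmf (insert i A) dflt q)"
    if "f \<in> set_pmf P" "y \<in> set_pmf (q i)" for f y
    using fun_upd_in_set_Pi_pmf[OF insert.hyps(1)] that unfolding P_def .
  have \<mu>_eq: "\<mu> = measure_pmf.expectation (q i) h"
    unfolding \<mu>_def h_def P_def using insert by (intro expectation_Pi_pmf_insert) auto
  have section_bound: "measure_pmf.expectation P (\<lambda>f. exp (l * (g (f(i := y)) - h y)))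
                         \<le> exp (l^2 * (\<Sum>j\<in>A. (c j)^2) / 8)"
    if y: "y \<in> set_pmf (q i)" for y
    unfolding P_def h_def
  proof (rule insert.IH)
    fix w j z
    assume "w \<in> set_pmf (Pi_pmf A dflt q)" "j \<in> A" "z \<in> set_pmf (q j)"
    with insert.hyps(1,2) y insert.prems(2)
    show "\<bar>g (w(i := y)) - g (w(j := z, i := y))\<bar> \<le> c j"
      by (rule bounded_differences_fun_upd)
  qed (use insert in auto)
  have h_oscillation: "h y \<le> h y' + c i"
    if "y \<in> set_pmf (q i)" "y' \<in> set_pmf (q i)" for y y'
    unfolding h_def
  proof (rule pmf_expectation_le_add_const[OF fin_P])
    fix f assume "f \<in> set_pmf P"
    from insert.prems(2)[OF upd_in_set[OF this that(2)] _ that(1)]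
    show "g (f(i := y)) \<le> g (f(i := y')) + c i"
      by (simp add: abs_le_iff del: fun_upd_apply)
  qed
  have "measure_pmf.expectation (Pi_pmf (insert i A) dflt q) (\<lambda>w. exp (l * (g w - \<mu>)))
      = measure_pmf.expectation (q i)
          (\<lambda>y. measure_pmf.expectation P (\<lambda>f. exp (l * (g (f(i := y)) - \<mu>))))"
    unfolding P_def using insert by (intro expectation_Pi_pmf_insert) auto
  also have "\<dots> = measure_pmf.expectation (q i) (\<lambda>y. exp (l * (h y - \<mu>)) *
                    measure_pmf.expectation P (\<lambda>f. exp (l * (g (f(i := y)) - h y))))"
    by (simp add: mult_exp_exp algebra_simps flip: integral_mult_right_zero)
  also have "\<dots> \<le> measure_pmf.expectation (q i)
                    (\<lambda>y. exp (l * (h y - \<mu>)) * exp (l^2 * (\<Sum>j\<in>A. (c j)^2) / 8))"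
    by (intro integral_mono_AE integrable_measure_pmf_finite fin_qi AE_pmfI mult_left_mono
          section_bound) auto
  also have "\<dots> = measure_pmf.expectation (q i) (\<lambda>y. exp (l * (h y - \<mu>)))
                    * exp (l^2 * (\<Sum>j\<in>A. (c j)^2) / 8)"
    by simp
  also have "\<dots> \<le> exp (l^2 * (c i)^2 / 8) * exp (l^2 * (\<Sum>j\<in>A. (c j)^2) / 8)"
    unfolding \<mu>_eq
    by (intro mult_right_mono Hoeffdings_lemma_pmf fin_qi assms(3) h_oscillation) auto
  also have "\<dots> = exp (l^2 * (\<Sum>j\<in>insert i A. (c j)^2) / 8)"
    using insert.hyps by (simp add: mult_exp_exp add_divide_distrib distrib_left)
  finally show ?case by (simp add: \<mu>_def)
qed

lemma McDiarmid_upper_tail: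
  fixes I :: "'i set" and q :: "'i \<Rightarrow> 'a pmf" and c :: "'i \<Rightarrow> real"
    and g :: "('i \<Rightarrow> 'a) \<Rightarrow> real" and \<alpha> S :: real
  assumes "finite I" "\<And>j. j \<in> I \<Longrightarrow> finite (set_pmf (q j))" "\<alpha> > 0" "S > 0"
    and "(\<Sum>j\<in>I. (c j)^2) \<le> S"
    and "\<And>w j y. w \<in> set_pmf (Pi_pmf I dflt q) \<Longrightarrow> j \<in> I \<Longrightarrow> y \<in> set_pmf (q j) \<Longrightarrow>
           \<bar>g w - g (w(j := y))\<bar> \<le> c j"
  shows "measure_pmf.prob (Pi_pmf I dflt q)
           {w. g w - measure_pmf.expectation (Pi_pmf I dflt q) g \<ge> \<alpha>}
         \<le> exp (- 2 * \<alpha>^2 / S)"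
proof -
  define M where "M = Pi_pmf I dflt q"
  define m where "m = measure_pmf.expectation M g"
  define l where "l = 4 * \<alpha> / S" \<comment> \<open>minimises \<open>- l * \<alpha> + l^2 * S / 8\<close>\<close>
  have l: "l > 0"
    using assms(3,4) by (simp add: l_def)
  have fin_M: "finite (set_pmf M)"
    using assms(1,2) by (auto simp: M_def set_Pi_pmf)
  have "measure_pmf.prob M {w. g w - m \<ge> \<alpha>}
        \<le> exp (- l * \<alpha>) * measure_pmf.expectation M (\<lambda>w. exp (l * (g w - m)))"
    using measure_pmf.Chernoff_ineq_ge[OF l, of M UNIV "\<lambda>w. g w - m" \<alpha>] fin_M
    by (simp add: set_integrable_def set_lebesgue_integral_def integrable_measure_pmf_finite)
  also have "\<dots> \<le> exp (- l * \<alpha>) * exp (l^2 * S / 8)"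
  proof (rule mult_left_mono)
    have "measure_pmf.expectation M (\<lambda>w. exp (l * (g w - m)))
          \<le> exp (l^2 * (\<Sum>j\<in>I. (c j)^2) / 8)"
      unfolding M_def m_def by (rule McDiarmid_exp_moment[where g = g, OF assms(1,2) l assms(6)])
    also have "\<dots> \<le> exp (l^2 * S / 8)"
      using assms(5) by (simp add: mult_left_mono)
    finally show "measure_pmf.expectation M (\<lambda>w. exp (l * (g w - m))) \<le> exp (l^2 * S / 8)" .
  qed simp
  also have "\<dots> = exp (- 2 * \<alpha>^2 / S)"
    using assms(4) by (simp add: mult_exp_exp l_def field_simps power2_eq_square)
  finally show ?thesis by (simp add: M_def m_def)
qed

lemma McDiarmid_inequality:
  fixes I :: "'i set" and q :: "'i \<Rightarrow> 'a pmf" and c :: "'i \<Rightarrow> real"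
    and g :: "('i \<Rightarrow> 'a) \<Rightarrow> real" and \<alpha> S :: real
  assumes "finite I" "\<And>j. j \<in> I \<Longrightarrow> finite (set_pmf (q j))" "\<alpha> > 0" "S > 0"
    and "(\<Sum>j\<in>I. (c j)^2) \<le> S"
    and "\<And>w j y. w \<in> set_pmf (Pi_pmf I dflt q) \<Longrightarrow> j \<in> I \<Longrightarrow> y \<in> set_pmf (q j) \<Longrightarrow>
           \<bar>g w - g (w(j := y))\<bar> \<le> c j"
  shows "measure_pmf.prob (Pi_pmf I dflt q)
           {w. \<bar>g w - measure_pmf.expectation (Pi_pmf I dflt q) g\<bar> \<ge> \<alpha>}
         \<le> 2 * exp (- 2 * \<alpha>^2 / S)"
proof -
  define M where "M = Pi_pmf I dflt q"
  define m where "m = measure_pmf.expectation M g"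
  have upper: "measure_pmf.prob M {w. g w - m \<ge> \<alpha>} \<le> exp (- 2 * \<alpha>^2 / S)"
    unfolding M_def m_def by (rule McDiarmid_upper_tail[where g = g, OF assms])
  have "measure_pmf.prob M {w. - g w - measure_pmf.expectation M (\<lambda>w. - g w) \<ge> \<alpha>}
        \<le> exp (- 2 * \<alpha>^2 / S)"
    unfolding M_def
    by (rule McDiarmid_upper_tail[OF assms(1-5)]) (use assms(6) in \<open>auto simp: abs_minus_commute\<close>)
  then have lower: "measure_pmf.prob M {w. m - g w \<ge> \<alpha>} \<le> exp (- 2 * \<alpha>^2 / S)"
    by (simp add: m_def)
  have "{w. \<bar>g w - m\<bar> \<ge> \<alpha>} = {w. g w - m \<ge> \<alpha>} \<union> {w. m - g w \<ge> \<alpha>}"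
    by auto
  then have "measure_pmf.prob M {w. \<bar>g w - m\<bar> \<ge> \<alpha>}
             \<le> measure_pmf.prob M {w. g w - m \<ge> \<alpha>} + measure_pmf.prob M {w. m - g w \<ge> \<alpha>}"
    by (simp add: measure_Un_le)
  with upper lower show ?thesis by (simp add: M_def m_def)
qed

lemma card_Collect_le_if_agree_outside:
  assumes "finite K" "finite U" "\<And>k. k \<notin> U \<Longrightarrow> P k \<longleftrightarrow> Q k"
  shows "card {k\<in>K. P k} \<le> card {k\<in>K. Q k} + card U"
proof -
  have "card {k\<in>K. P k} \<le> card ({k\<in>K. Q k} \<union> U)"
    using assms by (intro card_mono) auto
  also have "\<dots> \<le> card {k\<in>K. Q k} + card U"
    by (rule card_Un_le)
  finally show ?thesis .
qed

lemma card_Collect_neq_le: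
  fixes x y :: "'i \<Rightarrow> 'a::zero"
  assumes "finite A"
  shows "card {i\<in>A. x i \<noteq> y i} \<le> card {i\<in>A. x i \<noteq> 0} + card {i\<in>A. y i \<noteq> 0}"
proof -
  have "card {i\<in>A. x i \<noteq> y i} \<le> card ({i\<in>A. x i \<noteq> 0} \<union> {i\<in>A. y i \<noteq> 0})"
    using assms by (intro card_mono) auto
  also have "\<dots> \<le> card {i\<in>A. x i \<noteq> 0} + card {i\<in>A. y i \<noteq> 0}"
    by (rule card_Un_le)
  finally show ?thesis .
qed

lemma sum_mismatch_weights_le:
  fixes x y :: "'i \<Rightarrow> 'a::zero"
  assumes "finite A" "card {i\<in>A. x i \<noteq> 0} \<le> \<sigma>" "card {i\<in>A. y i \<noteq> 0} \<le> \<sigma>"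
  shows "(\<Sum>j\<in>A. (if x j = y j then 0 else 2::real)^2) \<le> 8 * real \<sigma>"
proof -
  have "(\<Sum>j\<in>A. (if x j = y j then 0 else 2::real)^2) = (\<Sum>j\<in>A. if x j \<noteq> y j then 4 else 0)"
    by (intro sum.cong) auto
  also have "\<dots> = 4 * real (card {j\<in>A. x j \<noteq> y j})"
    using assms(1) by (simp flip: sum.inter_filter)
  also have "\<dots> \<le> 8 * real \<sigma>"
    using card_Collect_neq_le[OF assms(1), of x y] assms(2,3) by simp
  finally show ?thesis .
qed

lemma pmf_of_set_PiE_Times_eq_map_Pi_pmf:
  fixes A :: "'i set" and B :: "'a set" and C :: "'b set"
  assumes "finite A" "finite B" "finite C" "B \<noteq> {}" "C \<noteq> {}"
  shows "pmf_of_set ((A \<rightarrow>\<^sub>E B) \<times> (A \<rightarrow>\<^sub>E C)) =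
         map_pmf (\<lambda>w. (restrict (fst \<circ> w) A, restrict (snd \<circ> w) A))
           (Pi_pmf A dflt (\<lambda>_. pmf_of_set (B \<times> C)))"
proof -
  define T where "T = (\<lambda>w :: 'i \<Rightarrow> 'a \<times> 'b. (restrict (fst \<circ> w) A, restrict (snd \<circ> w) A))"
  define W where "W = PiE_dflt A dflt (\<lambda>_. B \<times> C)"
  have "inj_on T W"
  proof (rule inj_onI)
    fix w w' assume "w \<in> W" "w' \<in> W" "T w = T w'"
    have "w i = w' i" for i
    proof (cases "i \<in> A")
      case True
      with \<open>T w = T w'\<close> show ?thesis
        by (auto simp: T_def prod_eq_iff dest!: fun_cong[where x=i])
    next
      case False
      with \<open>w \<in> W\<close> \<open>w' \<in> W\<close> show ?thesis
        by (simp add: W_def PiE_dflt_def)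
    qed
    then show "w = w'" ..
  qed
  moreover have "T ` W = (A \<rightarrow>\<^sub>E B) \<times> (A \<rightarrow>\<^sub>E C)"
  proof
    show "T ` W \<subseteq> (A \<rightarrow>\<^sub>E B) \<times> (A \<rightarrow>\<^sub>E C)"
      by (auto simp: T_def W_def PiE_dflt_def mem_Times_iff)
  next
    show "(A \<rightarrow>\<^sub>E B) \<times> (A \<rightarrow>\<^sub>E C) \<subseteq> T ` W"
    proof safe
      fix \<rho> r assume "\<rho> \<in> A \<rightarrow>\<^sub>E B" "r \<in> A \<rightarrow>\<^sub>E C"
      then have "(\<rho>, r) = T (\<lambda>i. if i \<in> A then (\<rho> i, r i) else dflt)"
            and "(\<lambda>i. if i \<in> A then (\<rho> i, r i) else dflt) \<in> W"
        by (auto simp: T_def W_def PiE_dflt_def restrict_def fun_eq_iff PiE_def extensional_def)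
      then show "(\<rho>, r) \<in> T ` W" by blast
    qed
  qed
  moreover have "Pi_pmf A dflt (\<lambda>_. pmf_of_set (B \<times> C)) = pmf_of_set W"
    unfolding W_def using assms by (intro Pi_pmf_of_set) auto
  moreover have "W \<noteq> {}" "finite W"
    using assms by (auto simp: W_def)
  ultimately show ?thesis
    by (simp add: T_def map_pmf_of_set_inj)
qed

lemma fsketch_phi_split:
  assumes "j \<in> {1..n}"
  shows "fsketch_phi n p \<rho> r k z =
           ((if \<rho> j = k then z j * r j else 0) + (\<Sum>i\<in>{i\<in>{1..n} - {j}. \<rho> i = k}. z i * r i)) mod p"
proof -
  have "{i\<in>{1..n}. \<rho> i = k} = (if \<rho> j = k then insert j else id) {i\<in>{1..n} - {j}. \<rho> i = k}"
    using assms by auto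
  then show ?thesis
    by (simp add: fsketch_phi_def)
qed

lemma fsketch_phi_fun_upd_other_bucket:
  assumes "k \<noteq> \<rho> j" "k \<noteq> a"
  shows "fsketch_phi n p (\<rho>(j := a)) (r(j := b)) k z = fsketch_phi n p \<rho> r k z"
proof -
  have "{i\<in>{1..n}. (\<rho>(j := a)) i = k} = {i\<in>{1..n}. \<rho> i = k}"
    using assms by auto
  moreover have "j \<notin> {i\<in>{1..n}. \<rho> i = k}"
    using assms by auto
  ultimately show ?thesis
    unfolding fsketch_phi_def by (metis (no_types, lifting) fun_upd_other sum.cong)
qed

lemma fsketch_phi_fun_upd_eq_iff:
  assumes "j \<in> {1..n}" "x j = y j"
  shows "fsketch_phi n p (\<rho>(j := a)) (r(j := b)) k x = fsketch_phi n p (\<rho>(j := a)) (r(j := b)) k y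
         \<longleftrightarrow> fsketch_phi n p \<rho> r k x = fsketch_phi n p \<rho> r k y"
proof -
  define R where "R = (\<lambda>z. \<Sum>i\<in>{i\<in>{1..n} - {j}. \<rho> i = k}. z i * r i)"
  have "fsketch_phi n p \<rho> r k z = ((if \<rho> j = k then z j * r j else 0) + R z) mod p" for z
    unfolding fsketch_phi_split[OF assms(1)] R_def ..
  moreover have "fsketch_phi n p (\<rho>(j := a)) (r(j := b)) k z = ((if a = k then z j * b else 0) + R z) mod p"
    for z
  proof -
    have "(\<Sum>i\<in>{i\<in>{1..n} - {j}. (\<rho>(j := a)) i = k}. z i * (r(j := b)) i) = R z"
      unfolding R_def by (intro sum.cong) auto
    then show ?thesis
      unfolding fsketch_phi_split[OF assms(1)] by simp
  qed
  ultimately show ?thesis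
    using assms(2) by (simp add: nat_mod_eq_iff)
qed

lemma fsketch_f_fun_upd_eq:
  assumes "j \<in> {1..n}" "x j = y j"
  shows "fsketch_f n d p x y (\<rho>(j := a), r(j := b)) = fsketch_f n d p x y (\<rho>, r)"
  unfolding fsketch_f_def using fsketch_phi_fun_upd_eq_iff[where x = x and y = y, OF assms] by simp

lemma fsketch_f_le_fun_upd:
  "fsketch_f n d p x y (\<rho>, r) \<le> fsketch_f n d p x y (\<rho>(j := a), r(j := b)) + 2"
proof -
  have "fsketch_f n d p x y (\<rho>, r) \<le> fsketch_f n d p x y (\<rho>(j := a), r(j := b)) + card {\<rho> j, a}"
    unfolding fsketch_f_def fst_conv snd_conv
    by (rule card_Collect_le_if_agree_outside) (auto simp: fsketch_phi_fun_upd_other_bucket)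
  moreover have "card {\<rho> j, a} \<le> 2"
    by (simp add: card_insert_le_m1)
  ultimately show ?thesis
    by linarith
qed

lemma fsketch_f_bounded_differences:
  assumes "j \<in> {1..n}"
  shows "\<bar>real (fsketch_f n d p x y (\<rho>, r)) - real (fsketch_f n d p x y (\<rho>(j := a), r(j := b)))\<bar>
           \<le> (if x j = y j then 0 else 2)"
proof (cases "x j = y j")
  case True
  then show ?thesis
    by (simp add: fsketch_f_fun_upd_eq[OF assms])
next
  case False
  have "fsketch_f n d p x y (\<rho>(j := a), r(j := b)) \<le> fsketch_f n d p x y (\<rho>, r) + 2"
    using fsketch_f_le_fun_upd[of n d p x y "\<rho>(j := a)" "r(j := b)" j "\<rho> j" "r j"]
    by simp
  with False fsketch_f_le_fun_upd[of n d p x y \<rho> r j a b] show ?thesis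
    by (simp add: abs_le_iff)
qed

theorem lemma3:
  fixes n d c \<sigma> p :: nat and x y :: "nat \<Rightarrow> nat" and \<alpha> :: real
  assumes "n \<ge> 1" "d \<ge> 1" "c \<ge> 1" "\<sigma> \<ge> 1" "prime p"
    and "x \<in> {1..n} \<rightarrow>\<^sub>E {0..c}" "y \<in> {1..n} \<rightarrow>\<^sub>E {0..c}"
    and "card {i\<in>{1..n}. x i \<noteq> 0} \<le> \<sigma>" "card {i\<in>{1..n}. y i \<noteq> 0} \<le> \<sigma>"
    and "\<alpha> > 0"
  shows "measure_pmf.prob (fsketch_pmf n d p)
           {\<omega>. \<bar>real (fsketch_f n d p x y \<omega>)
                 - measure_pmf.expectation (fsketch_pmf n d p) (\<lambda>\<omega>. real (fsketch_f n d p x y \<omega>))\<bar> \<ge> \<alpha>}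
         \<le> 2 * exp (- (\<alpha>^2 / (4 * real \<sigma>)))"
proof -
  define N where "N = {1..n}"
  define Q where "Q = Pi_pmf N undefined (\<lambda>_. pmf_of_set ({1..d} \<times> {0..<p}))"
  define T where "T = (\<lambda>w :: nat \<Rightarrow> nat \<times> nat. (restrict (fst \<circ> w) N, restrict (snd \<circ> w) N))"
  define F where "F = (\<lambda>\<omega>. real (fsketch_f n d p x y \<omega>))"
  define C where "C = (\<lambda>j. if x j = y j then 0 else (2::real))"
  have "p > 0"
    using assms(5) by (rule prime_gt_0_nat)
  then have fsketch_pmf_eq: "fsketch_pmf n d p = map_pmf T Q"
    unfolding fsketch_pmf_def fsketch_space_def N_def T_def Q_def
    using assms(2) by (intro pmf_of_set_PiE_Times_eq_map_Pi_pmf) auto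
  have sum_C: "(\<Sum>j\<in>N. (C j)^2) \<le> 8 * real \<sigma>"
    unfolding C_def N_def using assms(8,9) by (intro sum_mismatch_weights_le) auto
  have "\<bar>F (T w) - F (T (w(j := z)))\<bar> \<le> C j" if "j \<in> N" for w j z
  proof -
    have "T (w(j := z)) = ((fst (T w))(j := fst z), (snd (T w))(j := snd z))"
      using that by (auto simp: T_def)
    then show ?thesis
      using fsketch_f_bounded_differences[of j n d p x y "fst (T w)" "snd (T w)" "fst z" "snd z"] that
      by (simp add: F_def C_def N_def)
  qed
  then have "measure_pmf.prob Q {w. \<bar>F (T w) - measure_pmf.expectation Q (\<lambda>w. F (T w))\<bar> \<ge> \<alpha>}
             \<le> 2 * exp (- 2 * \<alpha>^2 / (8 * real \<sigma>))"
    unfolding Q_def using sum_C assms(2,4,10) \<open>p > 0\<close>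
    by (intro McDiarmid_inequality[where c = C]) (auto simp: N_def)
  then show ?thesis
    unfolding fsketch_pmf_eq F_def by (simp add: vimage_def)
qed

end
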